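(* Let $G$ be a directed graph with vertices $s,t$ and $k\ge1$. The function $\hat d_{\mathrm{cov}}:U^k_{\mathrm{lr}}\to\mathbb N$, $\hat d_{\mathrm{cov}}(C)=\sum_{e\in E_{\mathrm{shr}}(C)}(\mu_e(C)-1)$, is submodular on the lattice $L^*$, i.e. $\hat d_{\mathrm{cov}}(C_1\vee C_2)+\hat d_{\mathrm{cov}}(C_1\wedge C_2)\le\hat d_{\mathrm{cov}}(C_1)+\hat d_{\mathrm{cov}}(C_2)$ for all $C_1,C_2\in L^*$.
   Context: An $s$-$t$ cut of a directed graph $G$ is a set $X\subseteq E(G)$ such that removing $X$ leaves no directed $s$-$t$ path; $\Gamma_G(s,t)$ is the set of $s$-$t$ cuts of minimum cardinality. Fix a maximum-size collection $\mathcal P$ of pairwise edge-disjoint directed $s$-$t$ paths (each minimum $s$-$t$ cut contains exactly one edge of each path in $\mathcal P$). For $X,Y\in\Gamma_G(s,t)$, $S_{\min}(X\cup Y)$ (resp. $S_{\max}(X\cup Y)$) consists, for each $p\in\mathcal P$, of the edge of $(X\cup Y)\cap p$ occurring first (resp. last) along $p$. $X\le Y$ means every directed $s$-$t$ path meets an edge of $X$ at or before an edge of $Y$. $U^k_{\mathrm{lr}}$ is the set of $k$-tuples $[X_1,\dots,X_k]$ of elements of $\Gamma_G(s,t)$ with $X_i\le X_j$ for all $i<j$. $L^*$ is the lattice on $U^k_{\mathrm{lr}}$ with componentwise order, join $[X_i]_i\vee[Y_i]_i=[S_{\max}(X_i\cup Y_i)]_i$ and meet $[X_i]_i\wedge[Y_i]_i=[S_{\min}(X_i\cup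 Y_i)]_i$. For $C=[X_1,\dots,X_k]$, $\mu_e(C)$ is the number of indices $i$ with $e\in X_i$, and $E_{\mathrm{shr}}(C)=\{e\in E(G):\mu_e(C)\ge2\}$. *)

theory Defs
  imports Main "Graph_Theory.Digraph" "Graph_Theory.Arc_Walk"
begin

definition st_path :: "('a,'b) pre_digraph \<Rightarrow> 'a \<Rightarrow> 'a \<Rightarrow> 'b list \<Rightarrow> bool" where
  "st_path G s t p \<longleftrightarrow> pre_digraph.apath G s p t"

definition is_st_cut :: "('a,'b) pre_digraph \<Rightarrow> 'a \<Rightarrow> 'a \<Rightarrow> 'b set \<Rightarrow> bool" where
  "is_st_cut G s t X \<longleftrightarrow> X \<subseteq> arcs G \<and> (\<forall>p. st_path G s t p \<longrightarrow> set p \<inter> X \<noteq> {})"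

definition min_cuts :: "('a,'b) pre_digraph \<Rightarrow> 'a \<Rightarrow> 'a \<Rightarrow> 'b set set" where
  "min_cuts G s t = {X. is_st_cut G s t X \<and> (\<forall>Y. is_st_cut G s t Y \<longrightarrow> card X \<le> card Y)}"

definition edge_disjoint_paths :: "('a,'b) pre_digraph \<Rightarrow> 'a \<Rightarrow> 'a \<Rightarrow> 'b list set \<Rightarrow> bool" where
  "edge_disjoint_paths G s t P \<longleftrightarrow>
     (\<forall>p\<in>P. st_path G s t p) \<and> (\<forall>p\<in>P. \<forall>q\<in>P. p \<noteq> q \<longrightarrow> set p \<inter> set q = {})"

definition max_edge_disjoint_paths :: "('a,'b) pre_digraph \<Rightarrow> 'a \<Rightarrow> 'a \<Rightarrow> 'b list set \<Rightarrow> bool" where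
  "max_edge_disjoint_paths G s t P \<longleftrightarrow> edge_disjoint_paths G s t P \<and> finite P \<and>
     (\<forall>Q. edge_disjoint_paths G s t Q \<and> finite Q \<longrightarrow> card Q \<le> card P)"

definition first_in :: "'b set \<Rightarrow> 'b list \<Rightarrow> 'b" where
  "first_in A p = p ! (LEAST i. i < length p \<and> p ! i \<in> A)"

definition last_in :: "'b set \<Rightarrow> 'b list \<Rightarrow> 'b" where
  "last_in A p = p ! (GREATEST i. i < length p \<and> p ! i \<in> A)"

definition S_min :: "'b list set \<Rightarrow> 'b set \<Rightarrow> 'b set" where
  "S_min P Z = (\<lambda>p. first_in Z p) ` P"

definition S_max :: "'b list set \<Rightarrow> 'b set \<Rightarrow> 'b set" where
  "S_max P Z = (\<lambda>p. last_in Z p) ` P"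

definition cut_le :: "('a,'b) pre_digraph \<Rightarrow> 'a \<Rightarrow> 'a \<Rightarrow> 'b set \<Rightarrow> 'b set \<Rightarrow> bool" where
  "cut_le G s t X Y \<longleftrightarrow> (\<forall>p. st_path G s t p \<longrightarrow>
     (\<exists>i<length p. p ! i \<in> X \<and> (\<forall>j<i. p ! j \<notin> Y)))"

definition U_lr :: "('a,'b) pre_digraph \<Rightarrow> 'a \<Rightarrow> 'a \<Rightarrow> nat \<Rightarrow> 'b set list set" where
  "U_lr G s t k = {C. length C = k \<and> set C \<subseteq> min_cuts G s t \<and>
     (\<forall>i j. i < j \<and> j < k \<longrightarrow> cut_le G s t (C ! i) (C ! j))}"

definition tuple_join :: "'b list set \<Rightarrow> 'b set list \<Rightarrow> 'b set list \<Rightarrow> 'b set list" where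
  "tuple_join P C D = map2 (\<lambda>X Y. S_max P (X \<union> Y)) C D"

definition tuple_meet :: "'b list set \<Rightarrow> 'b set list \<Rightarrow> 'b set list \<Rightarrow> 'b set list" where
  "tuple_meet P C D = map2 (\<lambda>X Y. S_min P (X \<union> Y)) C D"

definition mult :: "'b \<Rightarrow> 'b set list \<Rightarrow> nat" where
  "mult e C = length (filter (\<lambda>X. e \<in> X) C)"

definition E_shr :: "('a,'b) pre_digraph \<Rightarrow> 'b set list \<Rightarrow> 'b set" where
  "E_shr G C = {e \<in> arcs G. 2 \<le> mult e C}"

definition d_cov :: "('a,'b) pre_digraph \<Rightarrow> 'b set list \<Rightarrow> nat" where
  "d_cov G C = (\<Sum>e\<in>E_shr G C. mult e C - 1)"

end

theory Submission
  imports Defs "HOL-Library.Disjoint_Sets"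
begin

(* By the edge version of Menger's theorem, which follows from decomposing unit s-t flows
   into paths together with an augmenting path argument in the residual graph, a minimum
   s-t cut has exactly card P edges and therefore meets every path of the maximum packing P
   in exactly one edge. A tuple C of minimum cuts is thus recorded, path by path, by the list
   of positions at which its cuts meet the path. The left-right order makes these lists
   sorted, the join and meet of L* act on them as componentwise max and min, and since the
   paths are edge-disjoint, d_cov C is the sum over all paths of the number of repeated
   entries of these lists. Submodularity thus reduces to the inequality
   card (set xs) + card (set ys) <= card (set (map2 max xs ys)) + card (set (map2 min xs ys))
   for sorted lists xs, ys of equal length. *)

section \<open>Unit flows and Menger's theorem\<close>

definition net_outflow :: "('a,'b) pre_digraph \<Rightarrow> 'b set \<Rightarrow> 'a \<Rightarrow> int" where
  "net_outflow H F v = (\<Sum>e\<in>F. of_bool (tail H e = v) - of_bool (head H e = v))"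

text \<open>A unit-capacity s-t flow of value m is represented by its support F.\<close>

definition is_st_flow :: "('a,'b) pre_digraph \<Rightarrow> 'a \<Rightarrow> 'a \<Rightarrow> 'b set \<Rightarrow> nat \<Rightarrow> bool" where
  "is_st_flow G s t F m \<longleftrightarrow> F \<subseteq> arcs G \<and> (\<forall>v. v \<noteq> s \<longrightarrow> v \<noteq> t \<longrightarrow> net_outflow G F v = 0)
     \<and> net_outflow G F s = int m"

lemma (in wf_digraph) awalk_net_outflow:
  "awalk u p v \<Longrightarrow>
    (\<Sum>e\<leftarrow>p. of_bool (tail G e = w) - of_bool (head G e = w) :: int) = of_bool (w = u) - of_bool (w = v)"
  by (induction p arbitrary: u) (auto simp: awalk_Nil_iff awalk_Cons_iff)

lemma (in wf_digraph) apath_net_outflow: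
  assumes "apath u p v"
  shows "net_outflow G (set p) w = of_bool (w = u) - of_bool (w = v)"
proof -
  have "distinct p" using assms distinct_verts_imp_distinct by (auto simp: apath_def)
  then have "net_outflow G (set p) w = (\<Sum>e\<leftarrow>p. of_bool (tail G e = w) - of_bool (head G e = w))"
    by (simp add: net_outflow_def sum_list_distinct_conv_sum_set)
  also have "\<dots> = of_bool (w = u) - of_bool (w = v)"
    using assms by (intro awalk_net_outflow) (simp add: apath_def)
  finally show ?thesis .
qed

lemma sum_net_outflow:
  assumes "finite R" "finite F"
  shows "(\<Sum>v\<in>R. net_outflow H F v) =
    int (card {e\<in>F. tail H e \<in> R \<and> head H e \<notin> R}) - int (card {e\<in>F. head H e \<in> R \<and> tail H e \<notin> R})"
proof -
  have delta: "(\<Sum>v\<in>R. of_bool (x = v) :: int) = of_bool (x \<in> R)" for x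
    using assms(1) by (simp add: of_bool_def)
  have "(\<Sum>v\<in>R. net_outflow H F v) = (\<Sum>e\<in>F. \<Sum>v\<in>R. of_bool (tail H e = v) - of_bool (head H e = v))"
    unfolding net_outflow_def by (rule sum.swap)
  also have "\<dots> = (\<Sum>e\<in>F. of_bool (tail H e \<in> R) - of_bool (head H e \<in> R))"
    by (simp add: sum_subtractf delta)
  also have "\<dots> = (\<Sum>e\<in>F. of_bool (tail H e \<in> R \<and> head H e \<notin> R) - of_bool (head H e \<in> R \<and> tail H e \<notin> R))"
    by (intro sum.cong) auto
  also have "\<dots> = int (card (F \<inter> {e. tail H e \<in> R \<and> head H e \<notin> R}))
      - int (card (F \<inter> {e. head H e \<in> R \<and> tail H e \<notin> R}))"
    using assms(2) by (simp add: sum_subtractf)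
  finally show ?thesis
    by (simp add: Collect_conj_eq)
qed

lemma st_flow_across_cut:
  assumes "is_st_flow G s t F m" "finite F" "finite R" "s \<in> R" "t \<notin> R"
  shows "int (card {e\<in>F. tail G e \<in> R \<and> head G e \<notin> R}) - int (card {e\<in>F. head G e \<in> R \<and> tail G e \<notin> R})
    = int m"
proof -
  have "(\<Sum>v\<in>R. net_outflow G F v) = net_outflow G F s + (\<Sum>v\<in>R - {s}. net_outflow G F v)"
    using assms by (simp add: sum.remove)
  also have "\<dots> = int m"
    using assms by (auto simp: is_st_flow_def intro: sum.neutral)
  finally show ?thesis using sum_net_outflow[OF assms(3,2), of G] by simp
qed

lemma (in wf_digraph) awalk_leaves_set:
  "awalk u p v \<Longrightarrow> u \<in> R \<Longrightarrow> v \<notin> R \<Longrightarrow> \<exists>e\<in>set p. tail G e \<in> R \<and> head G e \<notin> R"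
proof (induction p arbitrary: u)
  case (Cons e p)
  then show ?case by (cases "head G e \<in> R") (auto simp: awalk_Cons_iff)
qed (simp add: awalk_Nil_iff)

lemma (in fin_digraph) st_flow_reaches_sink:
  assumes flow: "is_st_flow G s t F (Suc m)" and s: "s \<in> verts G"
  obtains p where "awalk s p t" "set p \<subseteq> F"
proof -
  define R where "R = {v. \<exists>p. awalk s p v \<and> set p \<subseteq> F}"
  have "s \<in> R" unfolding R_def using s by (intro CollectI exI[of _ "[]"]) (simp add: awalk_Nil_iff)
  have "finite R" unfolding R_def by (rule finite_subset[OF _ finite_verts]) (auto dest: awalk_last_in_verts)
  have "finite F" using flow by (auto simp: is_st_flow_def intro: finite_subset[OF _ finite_arcs])
  have leaves: "{e\<in>F. tail G e \<in> R \<and> head G e \<notin> R} = {}"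
  proof -
    have "head G e \<in> R" if "e \<in> F" "tail G e \<in> R" for e
    proof -
      obtain p where "awalk s p (tail G e)" "set p \<subseteq> F" using \<open>tail G e \<in> R\<close> by (auto simp: R_def)
      moreover have "e \<in> arcs G" using flow \<open>e \<in> F\<close> by (auto simp: is_st_flow_def)
      ultimately have "awalk s (p @ [e]) (head G e)" "set (p @ [e]) \<subseteq> F"
        using \<open>e \<in> F\<close> by (auto simp: awalk_Cons_iff awalk_Nil_iff)
      then show ?thesis unfolding R_def by blast
    qed
    then show ?thesis by auto
  qed
  have "t \<in> R"
  proof (rule ccontr)
    assume "t \<notin> R"
    from st_flow_across_cut[OF flow \<open>finite F\<close> \<open>finite R\<close> \<open>s \<in> R\<close> this] show False
      unfolding leaves by simp
  qed
  then show ?thesis using that by (auto simp: R_def)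
qed

lemma (in fin_digraph) st_flow_decomposition:
  assumes "s \<noteq> t" "s \<in> verts G"
  shows "is_st_flow G s t F m \<Longrightarrow>
    \<exists>Q. edge_disjoint_paths G s t Q \<and> finite Q \<and> card Q = m \<and> (\<forall>q\<in>Q. set q \<subseteq> F)"
proof (induction m arbitrary: F)
  case 0
  show ?case by (intro exI[of _ "{}"]) (simp add: edge_disjoint_paths_def)
next
  case (Suc m)
  obtain p0 where p0: "awalk s p0 t" "set p0 \<subseteq> F"
    using st_flow_reaches_sink[OF Suc.prems assms(2)] .
  define p where "p = awalk_to_apath p0"
  have p: "apath s p t" "set p \<subseteq> F"
    using apath_awalk_to_apath awalk_to_apath_subset p0 unfolding p_def by blast+
  have "finite F" using Suc.prems by (auto simp: is_st_flow_def intro: finite_subset[OF _ finite_arcs])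
  have "net_outflow G (F - set p) v = net_outflow G F v - (of_bool (v = s) - of_bool (v = t))" for v
    unfolding net_outflow_def sum_diff[OF \<open>finite F\<close> p(2)]
    using apath_net_outflow[OF p(1)] by (simp add: net_outflow_def)
  then have "is_st_flow G s t (F - set p) m"
    using Suc.prems assms(1) by (auto simp: is_st_flow_def)
  then obtain Q where Q: "edge_disjoint_paths G s t Q" "finite Q" "card Q = m" "\<forall>q\<in>Q. set q \<subseteq> F - set p"
    using Suc.IH by blast
  have "p \<noteq> []" using p(1) assms(1) by (auto simp: apath_Nil_iff)
  then have "p \<notin> Q" using Q(4) by (cases p) auto
  have "edge_disjoint_paths G s t (insert p Q)"
    using Q(1,4) p(1) unfolding edge_disjoint_paths_def st_path_def by blast
  moreover have "card (insert p Q) = Suc m" using Q(2,3) \<open>p \<notin> Q\<close> by simp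
  ultimately show ?case using Q p(2) by blast
qed

lemma (in wf_digraph) edge_disjoint_paths_st_flow:
  assumes "edge_disjoint_paths G s t Q" "finite Q" "s \<noteq> t"
  shows "is_st_flow G s t (\<Union>q\<in>Q. set q) (card Q)"
proof -
  have apaths: "apath s q t" if "q \<in> Q" for q
    using assms(1) that by (auto simp: edge_disjoint_paths_def st_path_def)
  have "net_outflow G (\<Union>q\<in>Q. set q) v = (\<Sum>q\<in>Q. net_outflow G (set q) v)" for v
    unfolding net_outflow_def
    by (rule sum.UNION_disjoint) (use assms(1,2) in \<open>auto simp: edge_disjoint_paths_def\<close>)
  also have "\<dots> v = (\<Sum>q\<in>Q. of_bool (v = s) - of_bool (v = t))" for v
    using apaths by (intro sum.cong refl) (simp add: apath_net_outflow)
  finally have "net_outflow G (\<Union>q\<in>Q. set q) v = int (card Q) * (of_bool (v = s) - of_bool (v = t))" for v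
    by simp
  moreover have "(\<Union>q\<in>Q. set q) \<subseteq> arcs G"
    using apaths by (fastforce simp: apath_def)
  ultimately show ?thesis using assms(3) by (simp add: is_st_flow_def)
qed

definition residual :: "('a,'b) pre_digraph \<Rightarrow> 'b set \<Rightarrow> ('a, 'b \<times> bool) pre_digraph" where
  "residual G F = \<lparr>verts = verts G, arcs = {(e, e \<notin> F) | e. e \<in> arcs G},
     tail = (\<lambda>(e, fwd). if fwd then tail G e else head G e),
     head = (\<lambda>(e, fwd). if fwd then head G e else tail G e)\<rparr>"

lemma (in wf_digraph) wf_digraph_residual: "wf_digraph (residual G F)"
  by unfold_locales (auto simp: residual_def)

lemma net_outflow_residual:
  assumes "finite S"
  shows "net_outflow (residual G F) S v =
    net_outflow G {e. (e, True) \<in> S} v - net_outflow G {e. (e, False) \<in> S} v"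
proof -
  define A where "A = {e. (e, True) \<in> S}"
  define B where "B = {e. (e, False) \<in> S}"
  have "finite A" "finite B"
    unfolding A_def B_def using assms by (auto intro: finite_vimageI[unfolded vimage_def] simp: inj_on_def)
  have S: "S = (\<lambda>e. (e, True)) ` A \<union> (\<lambda>e. (e, False)) ` B"
  proof (intro set_eqI iffI)
    fix x assume "x \<in> S"
    then show "x \<in> (\<lambda>e. (e, True)) ` A \<union> (\<lambda>e. (e, False)) ` B"
      by (cases x; cases "snd x") (auto simp: A_def B_def)
  qed (auto simp: A_def B_def)
  have "net_outflow (residual G F) S v =
      (\<Sum>e\<in>A. of_bool (tail G e = v) - of_bool (head G e = v))
      + (\<Sum>e\<in>B. of_bool (head G e = v) - of_bool (tail G e = v))"
    unfolding net_outflow_def S using \<open>finite A\<close> \<open>finite B\<close>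
    by (subst sum.union_disjoint) (auto simp: sum.reindex inj_on_def residual_def)
  also have "\<dots> = net_outflow G A v - net_outflow G B v"
    by (simp add: net_outflow_def sum_subtractf)
  finally show ?thesis unfolding A_def B_def .
qed

lemma (in fin_digraph) st_flow_augment:
  assumes flow: "is_st_flow G s t F m" and "s \<noteq> t"
    and walk: "pre_digraph.awalk (residual G F) s p t"
  shows "\<exists>F'. is_st_flow G s t F' (Suc m)"
proof -
  interpret res: wf_digraph "residual G F" by (rule wf_digraph_residual)
  define q where "q = res.awalk_to_apath p"
  have q: "res.apath s q t" unfolding q_def using res.apath_awalk_to_apath[OF walk] .
  then have "set q \<subseteq> arcs (residual G F)" by (auto simp: res.apath_def)
  define A where "A = {e. (e, True) \<in> set q}"
  define B where "B = {e. (e, False) \<in> set q}"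
  have A: "A \<subseteq> arcs G - F" and B: "B \<subseteq> F"
    using \<open>set q \<subseteq> arcs (residual G F)\<close> by (auto simp: A_def B_def residual_def)
  have "finite F" using flow by (auto simp: is_st_flow_def intro: finite_subset[OF _ finite_arcs])
  have "finite A" using A finite_subset finite_arcs by blast
  have "net_outflow G ((F - B) \<union> A) v = net_outflow G F v - net_outflow G B v + net_outflow G A v" for v
    unfolding net_outflow_def using A B \<open>finite F\<close> \<open>finite A\<close>
    by (subst sum.union_disjoint) (auto simp: sum_diff)
  also have "\<dots> v = net_outflow G F v + (of_bool (v = s) - of_bool (v = t))" for v
    using net_outflow_residual[of "set q" G F v] res.apath_net_outflow[OF q, of v]
    unfolding A_def B_def by simp
  finally have "is_st_flow G s t ((F - B) \<union> A) (Suc m)"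
    using flow A \<open>s \<noteq> t\<close> by (auto simp: is_st_flow_def)
  then show ?thesis ..
qed

lemma (in fin_digraph) st_flow_residual_cut:
  assumes flow: "is_st_flow G s t F m" and "s \<in> verts G"
    and unreachable: "\<nexists>p. pre_digraph.awalk (residual G F) s p t"
  shows "\<exists>Z. is_st_cut G s t Z \<and> card Z = m"
proof -
  interpret res: wf_digraph "residual G F" by (rule wf_digraph_residual)
  define R where "R = {v. \<exists>p. res.awalk s p v}"
  have "s \<in> R" unfolding R_def using \<open>s \<in> verts G\<close>
    by (intro CollectI exI[of _ "[]"]) (simp add: res.awalk_Nil_iff, simp add: residual_def)
  have "t \<notin> R" using unreachable by (simp add: R_def)
  have "R \<subseteq> verts (residual G F)" unfolding R_def using res.awalk_last_in_verts by blast
  then have "finite R" by (simp add: residual_def finite_subset)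
  have "finite F" using flow by (auto simp: is_st_flow_def intro: finite_subset[OF _ finite_arcs])
  have closed: "head (residual G F) a \<in> R" if "a \<in> arcs (residual G F)" "tail (residual G F) a \<in> R" for a
  proof -
    obtain p where "res.awalk s p (tail (residual G F) a)" using \<open>tail (residual G F) a \<in> R\<close> by (auto simp: R_def)
    then have "res.awalk s (p @ [a]) (head (residual G F) a)"
      using that by (auto simp: res.awalk_Cons_iff res.awalk_Nil_iff)
    then show ?thesis unfolding R_def by blast
  qed
  define Z where "Z = {e\<in>arcs G. tail G e \<in> R \<and> head G e \<notin> R}"
  have out_of_R: "Z = {e\<in>F. tail G e \<in> R \<and> head G e \<notin> R}"
    using closed[of "(e, True)" for e] flow by (auto simp: Z_def residual_def is_st_flow_def)
  have into_R: "{e\<in>F. head G e \<in> R \<and> tail G e \<notin> R} = {}"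
    using closed[of "(e, False)" for e] flow by (auto simp: residual_def is_st_flow_def)
  have "card Z = m"
    using st_flow_across_cut[OF flow \<open>finite F\<close> \<open>finite R\<close> \<open>s \<in> R\<close> \<open>t \<notin> R\<close>]
    unfolding out_of_R[symmetric] into_R by simp
  moreover have "is_st_cut G s t Z"
    unfolding is_st_cut_def
  proof (intro conjI allI impI)
    fix p assume "st_path G s t p"
    then have "awalk s p t" by (simp add: st_path_def apath_def)
    with awalk_leaves_set[OF this \<open>s \<in> R\<close> \<open>t \<notin> R\<close>] show "set p \<inter> Z \<noteq> {}"
      by (auto simp: Z_def)
  qed (simp add: Z_def)
  ultimately show ?thesis by blast
qed

lemma (in fin_digraph) st_cut_card_le_max_paths:
  assumes "s \<in> verts G" "s \<noteq> t" and max: "max_edge_disjoint_paths G s t P"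
  obtains Z where "is_st_cut G s t Z" "card Z \<le> card P"
proof -
  have flow: "is_st_flow G s t (\<Union>p\<in>P. set p) (card P)"
    using max assms(2) by (auto simp: max_edge_disjoint_paths_def intro: edge_disjoint_paths_st_flow)
  have "\<nexists>p. pre_digraph.awalk (residual G (\<Union>p\<in>P. set p)) s p t"
  proof
    assume "\<exists>p. pre_digraph.awalk (residual G (\<Union>p\<in>P. set p)) s p t"
    then obtain F where "is_st_flow G s t F (Suc (card P))"
      using st_flow_augment[OF flow assms(2)] by blast
    then obtain Q where "edge_disjoint_paths G s t Q" "finite Q" "card Q = Suc (card P)"
      using st_flow_decomposition[OF assms(2,1)] by blast
    then show False using max by (fastforce simp: max_edge_disjoint_paths_def)
  qed
  then show ?thesis
    using st_flow_residual_cut[OF flow assms(1)] that by fastforce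
qed

section \<open>Minimum cuts as transversals of a path packing\<close>

definition transversal :: "'b list set \<Rightarrow> 'b set \<Rightarrow> bool" where
  "transversal P X \<longleftrightarrow> X \<subseteq> (\<Union>p\<in>P. set p) \<and> (\<forall>p\<in>P. \<exists>e. X \<inter> set p = {e})"

lemma hitting_set_of_disjoint_family:
  assumes "finite X" "disjoint_family_on S I" "\<forall>i\<in>I. X \<inter> S i \<noteq> {}" "card X \<le> card I"
  shows "X \<subseteq> (\<Union>i\<in>I. S i) \<and> (\<forall>i\<in>I. \<exists>e. X \<inter> S i = {e})"
proof -
  define f where "f i = (SOME e. e \<in> X \<inter> S i)" for i
  have f: "f i \<in> X \<inter> S i" if "i \<in> I" for i
    unfolding f_def using assms(3) that by (metis ex_in_conv someI_ex)
  have inj: "inj_on f I"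
    using f assms(2) by (intro inj_onI) (metis IntD2 disjoint_family_onD disjoint_iff)
  have "f ` I \<subseteq> X" using f by blast
  then have "card I \<le> card X"
    using card_mono[OF assms(1)] card_image[OF inj] by metis
  then have X: "X = f ` I"
    using \<open>f ` I \<subseteq> X\<close> assms(1,4) card_image[OF inj] by (metis card_subset_eq le_antisym)
  have "X \<inter> S i = {f i}" if "i \<in> I" for i
    using X f that assms(2) by (fastforce dest: disjoint_family_onD)
  then show ?thesis using X f by blast
qed

lemma (in fin_digraph) min_cut_transversal:
  assumes "s \<in> verts G" "s \<noteq> t" and max: "max_edge_disjoint_paths G s t P"
    and X: "X \<in> min_cuts G s t"
  shows "transversal P X"
proof -
  obtain Z where "is_st_cut G s t Z" "card Z \<le> card P"
    using st_cut_card_le_max_paths[OF assms(1-3)] .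
  then have "card X \<le> card P" using X by (force simp: min_cuts_def)
  moreover have "finite X" using X finite_arcs by (auto simp: min_cuts_def is_st_cut_def finite_subset)
  moreover have "disjoint_family_on set P" "\<forall>p\<in>P. X \<inter> set p \<noteq> {}"
    using max X by (auto simp: max_edge_disjoint_paths_def edge_disjoint_paths_def
        disjoint_family_on_def min_cuts_def is_st_cut_def)
  ultimately show ?thesis
    using hitting_set_of_disjoint_family[of X set P] by (simp add: transversal_def)
qed

section \<open>Position lists\<close>

definition first_index :: "'b set \<Rightarrow> 'b list \<Rightarrow> nat" where
  "first_index X p = (LEAST i. i < length p \<and> p ! i \<in> X)"

definition positions :: "'b set list \<Rightarrow> 'b list \<Rightarrow> nat list" where
  "positions C p = map (\<lambda>X. first_index X p) C"

lemma length_positions [simp]: "length (positions C p) = length C"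
  by (simp add: positions_def)

lemma first_index_singleton:
  assumes "distinct p" "X \<inter> set p = {e}"
  shows "first_index X p < length p" "p ! first_index X p = e"
    and "j < length p \<Longrightarrow> p ! j \<in> X \<longleftrightarrow> j = first_index X p"
proof -
  have "e \<in> set p" using assms(2) by blast
  then obtain i where i: "i < length p" "p ! i = e" by (auto simp: in_set_conv_nth)
  have iff: "p ! j \<in> X \<longleftrightarrow> j = i" if "j < length p" for j
  proof -
    have "p ! j \<in> X \<longleftrightarrow> p ! j = e" using assms(2) nth_mem[OF that] by blast
    also have "\<dots> \<longleftrightarrow> j = i" using i that assms(1) by (auto simp: nth_eq_iff_index_eq)
    finally show ?thesis .
  qed
  have "first_index X p = i"
    unfolding first_index_def by (rule Least_equality) (use i iff in auto)
  then show "first_index X p < length p" "p ! first_index X p = e"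
    and "j < length p \<Longrightarrow> p ! j \<in> X \<longleftrightarrow> j = first_index X p"
    using i iff by auto
qed

lemma first_last_in_Un:
  assumes "distinct p" "X \<inter> set p = {x}" "Y \<inter> set p = {y}"
  shows "first_in (X \<union> Y) p = p ! min (first_index X p) (first_index Y p)"
    and "last_in (X \<union> Y) p = p ! max (first_index X p) (first_index Y p)"
proof -
  note X = first_index_singleton[OF assms(1,2)] and Y = first_index_singleton[OF assms(1,3)]
  have iff: "i < length p \<and> p ! i \<in> X \<union> Y \<longleftrightarrow> i = first_index X p \<or> i = first_index Y p" for i
    using X Y by auto
  have "(LEAST i. i < length p \<and> p ! i \<in> X \<union> Y) = min (first_index X p) (first_index Y p)"
    unfolding iff by (rule Least_equality) auto
  moreover have "(GREATEST i. i < length p \<and> p ! i \<in> X \<union> Y) = max (first_index X p) (first_index Y p)"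
    unfolding iff by (rule Greatest_equality) auto
  ultimately show "first_in (X \<union> Y) p = p ! min (first_index X p) (first_index Y p)"
    and "last_in (X \<union> Y) p = p ! max (first_index X p) (first_index Y p)"
    by (simp_all add: first_in_def last_in_def)
qed

lemma sum_count_list_minus_one:
  assumes "set xs \<subseteq> A" "finite A"
  shows "(\<Sum>x\<in>A. count_list xs x - 1) = length xs - card (set xs)"
proof -
  have "(\<Sum>x\<in>A. count_list xs x - 1) = (\<Sum>x\<in>A. count_list xs x - of_bool (x \<in> set xs))"
    by (intro sum.cong) (auto simp: count_list_0_iff)
  also have "\<dots> = (\<Sum>x\<in>A. count_list xs x) - (\<Sum>x\<in>A. of_bool (x \<in> set xs))"
    by (rule sum_subtractf_nat) (auto simp: Suc_le_eq count_list_0_iff intro!: gr0I)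
  also have "\<dots> = length xs - card (set xs)"
    using assms by (simp add: sum_count_set Int_absorb1)
  finally show ?thesis .
qed

lemma card_set_sorted_Cons:
  "sorted (x # xs) \<Longrightarrow> xs \<noteq> [] \<Longrightarrow> card (set (x # xs)) = card (set xs) + of_bool (x \<noteq> hd xs)"
  by (cases xs) (auto simp: card_insert_if)

lemma sorted_map2:
  assumes "sorted xs" "sorted ys" and mono: "\<And>a b c d. a \<le> c \<Longrightarrow> b \<le> d \<Longrightarrow> f a b \<le> f c d"
  shows "sorted (map2 f xs ys)"
  using assms by (auto simp: sorted_iff_nth_mono intro!: mono)

lemma card_set_map2_max_min:
  fixes xs ys :: "'a::linorder list"
  assumes "length xs = length ys" "sorted xs" "sorted ys"
  shows "card (set xs) + card (set ys) \<le> card (set (map2 max xs ys)) + card (set (map2 min xs ys))"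
  using assms
proof (induction xs ys rule: list_induct2)
  case (Cons x xs y ys)
  show ?case
  proof (cases xs)
    case Nil
    with Cons.hyps show ?thesis by simp
  next
    case (Cons x' xs')
    with Cons.hyps obtain y' ys' where ys: "ys = y' # ys'" by (cases ys) auto
    have "x \<le> x'" "y \<le> y'" using Cons.prems \<open>xs = x' # xs'\<close> ys by auto
    \<comment> \<open>if x and y both increase strictly, so do max and min; if max and min both stay
      constant, then so do x and y, because max x y + min x y = x + y\<close>
    then have "of_bool (x \<noteq> x') + of_bool (y \<noteq> y')
        \<le> (of_bool (max x y \<noteq> max x' y') + of_bool (min x y \<noteq> min x' y') :: nat)"
      by (auto simp: max_def min_def)
    moreover have "sorted (map2 max (x # xs) (y # ys))"
      by (rule sorted_map2[OF Cons.prems]) (rule max.mono)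
    moreover have "sorted (map2 min (x # xs) (y # ys))"
      by (rule sorted_map2[OF Cons.prems]) (rule min.mono)
    ultimately show ?thesis
      using Cons.IH Cons.prems card_set_sorted_Cons[of x xs] card_set_sorted_Cons[of y ys]
        card_set_sorted_Cons[of "max x y" "map2 max xs ys"] card_set_sorted_Cons[of "min x y" "map2 min xs ys"]
      unfolding \<open>xs = x' # xs'\<close> ys by simp
  qed
qed simp

lemma repeats_map2_max_min_le:
  fixes xs ys :: "'a::linorder list"
  assumes "length xs = length ys" "sorted xs" "sorted ys"
  shows "(length xs - card (set (map2 max xs ys))) + (length ys - card (set (map2 min xs ys)))
    \<le> (length xs - card (set xs)) + (length ys - card (set ys))"
  using card_set_map2_max_min[OF assms] card_length[of "map2 max xs ys"] card_length[of "map2 min xs ys"]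
    assms(1) by simp

locale path_packing =
  fixes P :: "'b list set"
  assumes finite_paths: "finite P"
    and distinct_path: "p \<in> P \<Longrightarrow> distinct p"
    and disjoint_paths: "disjoint_family_on set P"
begin

lemma image_Int_path:
  assumes "\<forall>q\<in>P. f q \<in> set q" "p \<in> P"
  shows "f ` P \<inter> set p = {f p}"
  using assms disjoint_paths by (fastforce dest: disjoint_family_onD)

lemma transversal_image:
  assumes "\<forall>q\<in>P. f q \<in> set q"
  shows "transversal P (f ` P)"
  using assms image_Int_path[OF assms] by (fastforce simp: transversal_def)

lemma first_index_image:
  assumes "\<forall>q\<in>P. g q < length q" "p \<in> P"
  shows "first_index ((\<lambda>q. q ! g q) ` P) p = g p"
proof -
  have "\<forall>q\<in>P. q ! g q \<in> set q" using assms(1) by simp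
  note first = first_index_singleton[OF distinct_path[OF assms(2)] image_Int_path[OF this assms(2)]]
  show ?thesis using first(1,2) assms distinct_path[OF assms(2)] by (simp add: nth_eq_iff_index_eq)
qed

lemma
  assumes "transversal P X" "p \<in> P"
  shows first_index_transversal: "first_index X p < length p"
    and nth_mem_transversal_iff: "j < length p \<Longrightarrow> p ! j \<in> X \<longleftrightarrow> j = first_index X p"
proof -
  obtain x where "X \<inter> set p = {x}" using assms unfolding transversal_def by blast
  from first_index_singleton[OF distinct_path[OF assms(2)] this]
  show "first_index X p < length p" and "j < length p \<Longrightarrow> p ! j \<in> X \<longleftrightarrow> j = first_index X p"
    by blast+
qed

lemma
  assumes "transversal P X" "transversal P Y" "p \<in> P"
  shows first_in_Un_transversal: "first_in (X \<union> Y) p = p ! min (first_index X p) (first_index Y p)"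
    and last_in_Un_transversal: "last_in (X \<union> Y) p = p ! max (first_index X p) (first_index Y p)"
proof -
  obtain x where x: "X \<inter> set p = {x}" using assms(1,3) unfolding transversal_def by blast
  obtain y where y: "Y \<inter> set p = {y}" using assms(2,3) unfolding transversal_def by blast
  show "first_in (X \<union> Y) p = p ! min (first_index X p) (first_index Y p)"
    and "last_in (X \<union> Y) p = p ! max (first_index X p) (first_index Y p)"
    using first_last_in_Un[OF distinct_path[OF assms(3)] x y] by blast+
qed

lemma
  assumes "transversal P X" "transversal P Y"
  shows transversal_S_max: "transversal P (S_max P (X \<union> Y))"
    and transversal_S_min: "transversal P (S_min P (X \<union> Y))"
    and first_index_S_max: "p \<in> P \<Longrightarrow> first_index (S_max P (X \<union> Y)) p = max (first_index X p) (first_index Y p)"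
    and first_index_S_min: "p \<in> P \<Longrightarrow> first_index (S_min P (X \<union> Y)) p = min (first_index X p) (first_index Y p)"
proof -
  let ?mx = "\<lambda>q. max (first_index X q) (first_index Y q)"
  let ?mn = "\<lambda>q. min (first_index X q) (first_index Y q)"
  have "S_max P (X \<union> Y) = (\<lambda>q. q ! ?mx q) ` P" "S_min P (X \<union> Y) = (\<lambda>q. q ! ?mn q) ` P"
    using assms by (auto simp: S_max_def S_min_def last_in_Un_transversal first_in_Un_transversal)
  moreover have "\<forall>q\<in>P. ?mx q < length q" "\<forall>q\<in>P. ?mn q < length q"
    using assms first_index_transversal by (simp_all add: min_less_iff_disj)
  ultimately show "transversal P (S_max P (X \<union> Y))" "transversal P (S_min P (X \<union> Y))"
    and "p \<in> P \<Longrightarrow> first_index (S_max P (X \<union> Y)) p = ?mx p"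
    and "p \<in> P \<Longrightarrow> first_index (S_min P (X \<union> Y)) p = ?mn p"
    by (simp_all add: transversal_image first_index_image)
qed

lemma positions_tuple_join:
  assumes "\<forall>X\<in>set C. transversal P X" "\<forall>Y\<in>set D. transversal P Y" "p \<in> P"
  shows "positions (tuple_join P C D) p = map2 max (positions C p) (positions D p)"
proof -
  have "first_index (S_max P (X \<union> Y)) p = max (first_index X p) (first_index Y p)"
    if "(X, Y) \<in> set (zip C D)" for X Y
    using that assms by (blast dest: set_zip_leftD set_zip_rightD intro: first_index_S_max)
  then show ?thesis by (auto simp: positions_def tuple_join_def zip_map_map)
qed

lemma positions_tuple_meet:
  assumes "\<forall>X\<in>set C. transversal P X" "\<forall>Y\<in>set D. transversal P Y" "p \<in> P"
  shows "positions (tuple_meet P C D) p = map2 min (positions C p) (positions D p)"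
proof -
  have "first_index (S_min P (X \<union> Y)) p = min (first_index X p) (first_index Y p)"
    if "(X, Y) \<in> set (zip C D)" for X Y
    using that assms by (blast dest: set_zip_leftD set_zip_rightD intro: first_index_S_min)
  then show ?thesis by (auto simp: positions_def tuple_meet_def zip_map_map)
qed

lemma transversal_tuple_join:
  "\<forall>X\<in>set C. transversal P X \<Longrightarrow> \<forall>Y\<in>set D. transversal P Y \<Longrightarrow> \<forall>Z\<in>set (tuple_join P C D). transversal P Z"
  by (auto simp: tuple_join_def intro: transversal_S_max dest: set_zip_leftD set_zip_rightD)

lemma transversal_tuple_meet:
  "\<forall>X\<in>set C. transversal P X \<Longrightarrow> \<forall>Y\<in>set D. transversal P Y \<Longrightarrow> \<forall>Z\<in>set (tuple_meet P C D). transversal P Z"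
  by (auto simp: tuple_meet_def intro: transversal_S_min dest: set_zip_leftD set_zip_rightD)

lemma mult_nth_path:
  assumes "\<forall>X\<in>set C. transversal P X" "p \<in> P" "j < length p"
  shows "mult (p ! j) C = count_list (positions C p) j"
proof -
  have "filter (\<lambda>X. p ! j \<in> X) C = filter (\<lambda>X. j = first_index X p) C"
    using assms nth_mem_transversal_iff by (intro filter_cong) auto
  then show ?thesis
    by (simp add: mult_def positions_def count_list_eq_length_filter filter_map comp_def)
qed

lemma d_cov_eq_sum_positions:
  assumes arcs: "(\<Union>p\<in>P. set p) \<subseteq> arcs G" and C: "\<forall>X\<in>set C. transversal P X"
  shows "d_cov G C = (\<Sum>p\<in>P. length C - card (set (positions C p)))"
proof -
  have "E_shr G C \<subseteq> (\<Union>p\<in>P. set p)"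
  proof
    fix e assume "e \<in> E_shr G C"
    then have "filter (\<lambda>X. e \<in> X) C \<noteq> []" by (auto simp: E_shr_def mult_def)
    then obtain X where "X \<in> set C" "e \<in> X" by (auto simp: filter_empty_conv)
    then show "e \<in> (\<Union>p\<in>P. set p)" using C unfolding transversal_def by blast
  qed
  then have "d_cov G C = (\<Sum>e\<in>(\<Union>p\<in>P. set p). mult e C - 1)"
    unfolding d_cov_def using arcs finite_paths
    by (intro sum.mono_neutral_left) (auto simp: E_shr_def)
  also have "\<dots> = (\<Sum>p\<in>P. \<Sum>e\<in>set p. mult e C - 1)"
    using finite_paths disjoint_paths by (intro sum.UNION_disjoint) (auto dest: disjoint_family_onD)
  also have "\<dots> = (\<Sum>p\<in>P. \<Sum>j<length p. count_list (positions C p) j - 1)"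
  proof (intro sum.cong refl)
    fix p assume "p \<in> P"
    then have "(\<Sum>e\<in>set p. mult e C - 1) = (\<Sum>j<length p. mult (p ! j) C - 1)"
      using distinct_path by (simp add: sum_list_distinct_conv_sum_set[symmetric] sum_list_sum_nth atLeast0LessThan)
    also have "\<dots> = (\<Sum>j<length p. count_list (positions C p) j - 1)"
      using C \<open>p \<in> P\<close> by (intro sum.cong refl) (simp add: mult_nth_path)
    finally show "(\<Sum>e\<in>set p. mult e C - 1) = \<dots>" .
  qed
  also have "\<dots> = (\<Sum>p\<in>P. length C - card (set (positions C p)))"
  proof (rule sum.cong[OF refl])
    fix p assume "p \<in> P"
    then have "set (positions C p) \<subseteq> {..<length p}"
      using C first_index_transversal by (auto simp: positions_def)
    from sum_count_list_minus_one[OF this finite_lessThan]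
    show "(\<Sum>j<length p. count_list (positions C p) j - 1) = length C - card (set (positions C p))"
      by simp
  qed
  finally show ?thesis .
qed

lemma sorted_positions:
  assumes "C \<in> U_lr G s t k" "\<forall>X\<in>set C. transversal P X" "p \<in> P" "st_path G s t p"
  shows "sorted (positions C p)"
proof -
  have "first_index (C ! i) p \<le> first_index (C ! j) p" if "i < j" "j < k" for i j
  proof -
    have X: "transversal P (C ! i)" and Y: "transversal P (C ! j)"
      using assms(1,2) that by (auto simp: U_lr_def)
    have "cut_le G s t (C ! i) (C ! j)" using assms(1) that by (simp add: U_lr_def)
    then obtain m where m: "m < length p" "p ! m \<in> C ! i" "\<forall>l<m. p ! l \<notin> C ! j"
      using assms(4) unfolding cut_le_def by blast
    have "m = first_index (C ! i) p" using m nth_mem_transversal_iff[OF X assms(3)] by blast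
    moreover have "p ! first_index (C ! j) p \<in> C ! j"
      using nth_mem_transversal_iff[OF Y assms(3)] first_index_transversal[OF Y assms(3)] by blast
    ultimately show ?thesis using m(3) by (meson not_le)
  qed
  then show ?thesis
    using assms(1) by (auto simp: sorted_iff_nth_mono_less positions_def U_lr_def)
qed

lemma d_cov_tuple_join_meet_le:
  assumes arcs: "(\<Union>p\<in>P. set p) \<subseteq> arcs G" and paths: "\<forall>p\<in>P. st_path G s t p"
    and C1: "C1 \<in> U_lr G s t k" "\<forall>X\<in>set C1. transversal P X"
    and C2: "C2 \<in> U_lr G s t k" "\<forall>X\<in>set C2. transversal P X"
  shows "d_cov G (tuple_join P C1 C2) + d_cov G (tuple_meet P C1 C2) \<le> d_cov G C1 + d_cov G C2"
proof -
  let ?J = "tuple_join P C1 C2" and ?M = "tuple_meet P C1 C2"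
  have length: "length C1 = k" "length C2 = k" "length ?J = k" "length ?M = k"
    using C1 C2 by (simp_all add: U_lr_def tuple_join_def tuple_meet_def)
  have "(k - card (set (positions ?J p))) + (k - card (set (positions ?M p)))
      \<le> (k - card (set (positions C1 p))) + (k - card (set (positions C2 p)))" if "p \<in> P" for p
    using repeats_map2_max_min_le[of "positions C1 p" "positions C2 p"] length(1,2)
      sorted_positions[OF C1 that] sorted_positions[OF C2 that] paths that
      positions_tuple_join[OF C1(2) C2(2) that] positions_tuple_meet[OF C1(2) C2(2) that]
    by simp
  then have "(\<Sum>p\<in>P. (k - card (set (positions ?J p))) + (k - card (set (positions ?M p))))
      \<le> (\<Sum>p\<in>P. (k - card (set (positions C1 p))) + (k - card (set (positions C2 p))))"
    by (rule sum_mono)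
  then show ?thesis
    using length d_cov_eq_sum_positions[OF arcs] C1(2) C2(2)
      transversal_tuple_join[OF C1(2) C2(2)] transversal_tuple_meet[OF C1(2) C2(2)]
    by (simp add: sum.distrib)
qed

end

theorem theorem7:
  fixes G :: "('a,'b) pre_digraph" and s t :: 'a and k :: nat and P :: "'b list set"
    and C1 C2 :: "'b set list"
  assumes "fin_digraph G" and "s \<in> verts G" and "t \<in> verts G" and "k \<ge> 1"
    and "max_edge_disjoint_paths G s t P"
    and "C1 \<in> U_lr G s t k" and "C2 \<in> U_lr G s t k"
  shows "d_cov G (tuple_join P C1 C2) + d_cov G (tuple_meet P C1 C2) \<le> d_cov G C1 + d_cov G C2"
proof -
  interpret fin_digraph G by fact
  have paths: "st_path G s t p" "apath s p t" if "p \<in> P" for p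
    using assms(5) that by (auto simp: max_edge_disjoint_paths_def edge_disjoint_paths_def st_path_def)
  interpret path_packing P
    using assms(5) paths(2) distinct_verts_imp_distinct
    by unfold_locales (auto simp: max_edge_disjoint_paths_def edge_disjoint_paths_def disjoint_family_on_def apath_def)
  have "s \<noteq> t"
  proof
    assume "s = t"
    then have "st_path G s t []" using assms(2) by (simp add: st_path_def apath_Nil_iff)
    moreover have "C1 ! 0 \<in> set C1" using assms(4,6) by (simp add: U_lr_def)
    then have "C1 ! 0 \<in> min_cuts G s t" using assms(6) by (auto simp: U_lr_def)
    ultimately show False by (force simp: min_cuts_def is_st_cut_def)
  qed
  have transversal: "\<forall>X\<in>set C. transversal P X" if "C \<in> U_lr G s t k" for C
    using that min_cut_transversal[OF assms(2) \<open>s \<noteq> t\<close> assms(5)] by (auto simp: U_lr_def)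
  have "(\<Union>p\<in>P. set p) \<subseteq> arcs G" using paths(2) by (fastforce simp: apath_def)
  from d_cov_tuple_join_meet_le[OF this _ assms(6) transversal[OF assms(6)] assms(7) transversal[OF assms(7)]]
  show ?thesis using paths(1) by blast
qed

end
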